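(* Let $C$ be a complex scheme of even type and $p$ an odd prime. 1. If $\Lambda^-\not\equiv\Lambda^+\pmod p$, then $\mathfrak Z_{\vec c,p}$ has no edges, and each of its vertices is indexed by a region other than the outer region $R_1$. 2. If $\Lambda^-\equiv\Lambda^+\pmod p$, then: - $\mathfrak Z_{\vec c,p}$ contains $u_1,u_2,u_3$ and the edges $u_1u_2$ and $u_1u_3$; - $\mathfrak Z_{\vec c,p}$ contains $R_1$ and the edge $u_1R_1$ if and only if $\Pi^+_o-\Pi^-_o\equiv1\pmod p$ for every outer oval $o$; - $\mathfrak Z_{\vec c,p}$ contains no other edges, and its only other possible vertices are indexed by regions other than $R_1$.
   Context: A complex scheme $C$ in $\mathbb{R}P^2$ is a finite collection of disjoint smooth simple closed curves, up to isotopy, at most one of which is one-sided. The two-sided components are ovals, and $C$ carries a semi-orientation. $C$ has even type if it has no one-sided component; then an auxiliary oriented one-sided curve $J$ disjoint from the ovals is fixed. Numerical characteristics: - Regions are the components of $\mathbb{R}P^2\setminus(C\cup J)$, and the outer region $R_1$ is the one whose closure meets $J$. Outer ovals are those in the boundary of $R_1$. The parity $\mathrm{par}$ of a region or oval is the parity of the number of ovals crossed to reach $R_1$. - For an oval $o$ bounding a disk $D_o$ and $x\in\mathrm{int}D_o$, one has $[o]=\pm2[J]$ in $H_1(\mathbb{R}P^2\setminus\{x\})$; $o$ is negative if $[o]=2[J]$, positive otherwise, and $\epsilon(o)=\pm1$ accordingly. $\Lambda^\pm$ is the number of positive/negative ovals. - Two ovals form an injective pair if they bound an annulus. The pair is positive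 if their orientations are the boundary orientation of some orientation of the annulus, and negative otherwise. $\Pi^\pm_o$ is the number of ovals forming a positive/negative injective pair with $o$. $\Gamma=\Gamma(C)$ is the weighted tree with vertices $R$ (weight $2\chi(R)$) for each region, $o$ (weight $0$) for each oval, and $u_1,u_2,u_3$ (weights $1,2,2$). Its edges are $Ro$ for $o\subset\partial R$, and $u_1u_2$, $u_1u_3$, $u_1R_1$. In the even type case its arrows are one arrow at each oval $o$, of sign $(-1)^{\mathrm{par}(o)+1}\epsilon(o)$. $A_\Gamma$ has the weights on the diagonal and $1$ for adjacent vertices, $0$ otherwise. Derived quantities. - $\vec s$ has entry $\pm1$ at the tail of a $\pm$ arrow and $0$ elsewhere; $\vec c=-2\vec sA_\Gamma^{-1}$. - $\Gamma^+$ is obtained by converting arrows into edges and arrowheads into new weight-$0$ vertices, and $\vec c^{\,+}$ extends $\vec c$ by $\pm2$ (the arrow sign) at the new vertices. - $\mathfrak Z_{\vec c,p}$ is the subgraph of $\Gamma$ whose vertices are the $v\in v(\Gamma)$ with $\vec c_v\equiv0\pmod p$ that are not joined by an edge of $\Gamma^+$ to any $w$ with $\vec c^{\,+}_w\not\equiv0\pmod p$; its edges are the edges of $\Gamma$ among these vertices. *)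

theory Defs
  imports Complex_Main "HOL-Number_Theory.Cong"
begin

text \<open>Combinatorial encoding of a complex scheme of even type in RP^2.
  The ovals form a finite set Ovs; up x = Some q means that q is the oval
  immediately enclosing x (x lies in the region directly inside q),
  up x = None means x is an outer oval. eps x is the sign epsilon(x)
  (+1 positive, -1 negative) of x with respect to the fixed oriented J.\<close>

definition up_rel :: "'x set \<Rightarrow> ('x \<Rightarrow> 'x option) \<Rightarrow> ('x \<times> 'x) set" where
  "up_rel Ovs up = {(x, q). x \<in> Ovs \<and> up x = Some q}"

definition even_scheme :: "'x set \<Rightarrow> ('x \<Rightarrow> 'x option) \<Rightarrow> ('x \<Rightarrow> int) \<Rightarrow> bool" where
  "even_scheme Ovs up eps \<longleftrightarrow> finite Ovs
     \<and> (\<forall>x\<in>Ovs. \<forall>q. up x = Some q \<longrightarrow> q \<in> Ovs)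
     \<and> (\<forall>x\<in>Ovs. (x, x) \<notin> (up_rel Ovs up)\<^sup>+)
     \<and> (\<forall>x\<in>Ovs. eps x = 1 \<or> eps x = -1)"

definition encloses :: "'x set \<Rightarrow> ('x \<Rightarrow> 'x option) \<Rightarrow> 'x \<Rightarrow> 'x \<Rightarrow> bool" where
  "encloses Ovs up q x \<longleftrightarrow> (x, q) \<in> (up_rel Ovs up)\<^sup>+"

text \<open>parity of an oval: number of ovals crossed to reach R_1 (the enclosing ovals)\<close>
definition depth :: "'x set \<Rightarrow> ('x \<Rightarrow> 'x option) \<Rightarrow> 'x \<Rightarrow> nat" where
  "depth Ovs up x = card {q \<in> Ovs. encloses Ovs up q x}"

definition outer_ovals :: "'x set \<Rightarrow> ('x \<Rightarrow> 'x option) \<Rightarrow> 'x set" where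
  "outer_ovals Ovs up = {x \<in> Ovs. up x = None}"

definition children :: "'x set \<Rightarrow> ('x \<Rightarrow> 'x option) \<Rightarrow> 'x \<Rightarrow> 'x set" where
  "children Ovs up q = {x \<in> Ovs. up x = Some q}"

definition Lambda_plus :: "'x set \<Rightarrow> ('x \<Rightarrow> int) \<Rightarrow> nat" where
  "Lambda_plus Ovs eps = card {x \<in> Ovs. eps x = 1}"

definition Lambda_minus :: "'x set \<Rightarrow> ('x \<Rightarrow> int) \<Rightarrow> nat" where
  "Lambda_minus Ovs eps = card {x \<in> Ovs. eps x = -1}"

text \<open>Orienting the annulus between
  nested ovals x, x', the pair is positive iff their orientations are of opposite
  type w.r.t. their disks, i.e. iff eps x differs from eps x'.\<close>
definition injective_pair :: "'x set \<Rightarrow> ('x \<Rightarrow> 'x option) \<Rightarrow> 'x \<Rightarrow> 'x \<Rightarrow> bool" where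
  "injective_pair Ovs up x x' \<longleftrightarrow> x \<in> Ovs \<and> x' \<in> Ovs \<and> (encloses Ovs up x x' \<or> encloses Ovs up x' x)"

definition Pi_plus :: "'x set \<Rightarrow> ('x \<Rightarrow> 'x option) \<Rightarrow> ('x \<Rightarrow> int) \<Rightarrow> 'x \<Rightarrow> nat" where
  "Pi_plus Ovs up eps x = card {x' \<in> Ovs. injective_pair Ovs up x x' \<and> eps x' \<noteq> eps x}"

definition Pi_minus :: "'x set \<Rightarrow> ('x \<Rightarrow> 'x option) \<Rightarrow> ('x \<Rightarrow> int) \<Rightarrow> 'x \<Rightarrow> nat" where
  "Pi_minus Ovs up eps x = card {x' \<in> Ovs. injective_pair Ovs up x x' \<and> eps x' = eps x}"

text \<open>Vertices of Gamma^+: u1,u2,u3, the outer region R_1, the region Reg x lying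
  directly inside the oval x, the oval vertex Ov x, and the arrowhead Head x of
  the arrow at x (only in Gamma^+).\<close>
datatype 'x vtx = U1 | U2 | U3 | ROut | Reg 'x | Ov 'x | Head 'x

definition outside_region :: "('x \<Rightarrow> 'x option) \<Rightarrow> 'x \<Rightarrow> 'x vtx" where
  "outside_region up x = (case up x of None \<Rightarrow> ROut | Some q \<Rightarrow> Reg q)"

definition Gverts :: "'x set \<Rightarrow> 'x vtx set" where
  "Gverts Ovs = {U1, U2, U3, ROut} \<union> Reg ` Ovs \<union> Ov ` Ovs"

definition Gedges :: "'x set \<Rightarrow> ('x \<Rightarrow> 'x option) \<Rightarrow> 'x vtx set set" where
  "Gedges Ovs up = {{U1, U2}, {U1, U3}, {U1, ROut}}
     \<union> (\<lambda>x. {Ov x, Reg x}) ` Ovs \<union> (\<lambda>x. {Ov x, outside_region up x}) ` Ovs"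

definition Gplus_edges :: "'x set \<Rightarrow> ('x \<Rightarrow> 'x option) \<Rightarrow> 'x vtx set set" where
  "Gplus_edges Ovs up = Gedges Ovs up \<union> (\<lambda>x. {Ov x, Head x}) ` Ovs"

text \<open>Euler characteristics: R_1 is a disk (RP^2 minus J) with the outer disks removed,
  Reg x is the disk of x with the disks of its children removed.\<close>
definition weight :: "'x set \<Rightarrow> ('x \<Rightarrow> 'x option) \<Rightarrow> 'x vtx \<Rightarrow> int" where
  "weight Ovs up v = (case v of
       U1 \<Rightarrow> 1 | U2 \<Rightarrow> 2 | U3 \<Rightarrow> 2
     | ROut \<Rightarrow> 2 * (1 - int (card (outer_ovals Ovs up)))
     | Reg x \<Rightarrow> 2 * (1 - int (card (children Ovs up x)))
     | Ov x \<Rightarrow> 0 | Head x \<Rightarrow> 0)"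

definition A_Gamma :: "'x set \<Rightarrow> ('x \<Rightarrow> 'x option) \<Rightarrow> 'x vtx \<Rightarrow> 'x vtx \<Rightarrow> int" where
  "A_Gamma Ovs up v w = (if v = w then weight Ovs up v
                       else if {v, w} \<in> Gedges Ovs up then 1 else 0)"

definition arrow_sign :: "'x set \<Rightarrow> ('x \<Rightarrow> 'x option) \<Rightarrow> ('x \<Rightarrow> int) \<Rightarrow> 'x \<Rightarrow> int" where
  "arrow_sign Ovs up eps x = (-1) ^ (depth Ovs up x + 1) * eps x"

definition s_vec :: "'x set \<Rightarrow> ('x \<Rightarrow> 'x option) \<Rightarrow> ('x \<Rightarrow> int) \<Rightarrow> 'x vtx \<Rightarrow> int" where
  "s_vec Ovs up eps v = (case v of Ov x \<Rightarrow> arrow_sign Ovs up eps x | _ \<Rightarrow> 0)"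

text \<open>c = -2 s A^{-1}, i.e. the unique vector (supported on the vertices of Gamma)
  with c A = -2 s.\<close>
definition c_vec :: "'x set \<Rightarrow> ('x \<Rightarrow> 'x option) \<Rightarrow> ('x \<Rightarrow> int) \<Rightarrow> 'x vtx \<Rightarrow> rat" where
  "c_vec Ovs up eps = (THE c. (\<forall>w\<in>Gverts Ovs.
        (\<Sum>v\<in>Gverts Ovs. c v * of_int (A_Gamma Ovs up v w)) = -2 * of_int (s_vec Ovs up eps w))
      \<and> (\<forall>v. v \<notin> Gverts Ovs \<longrightarrow> c v = 0))"

definition c_plus :: "'x set \<Rightarrow> ('x \<Rightarrow> 'x option) \<Rightarrow> ('x \<Rightarrow> int) \<Rightarrow> 'x vtx \<Rightarrow> rat" where
  "c_plus Ovs up eps v = (case v of Head x \<Rightarrow> of_int (2 * arrow_sign Ovs up eps x)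
                                 | _ \<Rightarrow> c_vec Ovs up eps v)"

definition rat_cong0 :: "nat \<Rightarrow> rat \<Rightarrow> bool" where
  "rat_cong0 p q \<longleftrightarrow> (\<exists>a b :: int. b \<noteq> 0 \<and> \<not> int p dvd b \<and> int p dvd a
                                   \<and> q = of_int a / of_int b)"

definition Z_verts :: "nat \<Rightarrow> 'x set \<Rightarrow> ('x \<Rightarrow> 'x option) \<Rightarrow> ('x \<Rightarrow> int) \<Rightarrow> 'x vtx set" where
  "Z_verts p Ovs up eps = {v \<in> Gverts Ovs. rat_cong0 p (c_vec Ovs up eps v)
       \<and> (\<forall>w. {v, w} \<in> Gplus_edges Ovs up \<longrightarrow> rat_cong0 p (c_plus Ovs up eps w))}"

definition Z_edges :: "nat \<Rightarrow> 'x set \<Rightarrow> ('x \<Rightarrow> 'x option) \<Rightarrow> ('x \<Rightarrow> int) \<Rightarrow> 'x vtx set set" where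
  "Z_edges p Ovs up eps = {e \<in> Gedges Ovs up. e \<subseteq> Z_verts p Ovs up eps}"

end

theory Submission
  imports Defs
begin

(* The vector c = -2 s A_Gamma^-1 can be computed in closed form. The equations at the
   triangle u1, u2, u3 force c(R_1) = 0 and c(u1) = -2 c(u2) = -2 c(u3) = 4 (Lambda^+ - Lambda^-);
   the oval equations c(inside) + c(outside) = -2 s then determine the region values from the
   outside in, and the region equations determine the oval values from the inside out. For an
   outer oval o this gives c(o) = -4 eps(o) (1 + Pi^-_o - Pi^+_o). Since every arrowhead carries
   +-2, a unit modulo the odd prime p, no oval vertex lies in Z, so the only possible edges of Z
   are u1u2, u1u3, u1R_1, and membership of u1, u2, u3, R_1 is read off from the values above. *)

section \<open>The nesting forest of the ovals\<close>

locale oval_forest =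
  fixes Ovs :: "'x set" and up :: "'x \<Rightarrow> 'x option"
  assumes finite_Ovs: "finite Ovs"
    and up_closed: "x \<in> Ovs \<Longrightarrow> up x = Some q \<Longrightarrow> q \<in> Ovs"
    and up_acyclic: "x \<in> Ovs \<Longrightarrow> (x, x) \<notin> (up_rel Ovs up)\<^sup>+"
begin

abbreviation Up :: "('x \<times> 'x) set" where
  "Up \<equiv> up_rel Ovs up"

definition ancestors :: "'x \<Rightarrow> 'x set" where
  "ancestors x = {q \<in> Ovs. encloses Ovs up q x}"

definition subtree :: "'x \<Rightarrow> 'x set" where
  "subtree x = {z \<in> Ovs. (z, x) \<in> Up\<^sup>*}"

lemma Up_iff: "(x, q) \<in> Up \<longleftrightarrow> x \<in> Ovs \<and> up x = Some q"
  by (simp add: up_rel_def)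

lemma Up_functional: "(x, a) \<in> Up \<Longrightarrow> (x, b) \<in> Up \<Longrightarrow> a = b"
  by (simp add: Up_iff)

lemma finite_Up: "finite Up"
proof -
  have "Up \<subseteq> Ovs \<times> Ovs"
    using up_closed by (auto simp: Up_iff)
  then show ?thesis
    using finite_Ovs by (meson finite_SigmaI finite_subset)
qed

lemma acyclic_Up: "acyclic Up"
  unfolding acyclic_def
proof
  fix x
  show "(x, x) \<notin> Up\<^sup>+"
  proof
    assume x: "(x, x) \<in> Up\<^sup>+"
    then have "x \<in> Ovs"
      by (auto dest: tranclD simp: Up_iff)
    with x up_acyclic show False by blast
  qed
qed

lemma wf_Up: "wf Up"
  using finite_Up acyclic_Up finite_acyclic_wf by blast

lemma wf_converse_Up: "wf (Up\<inverse>)"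
  using finite_Up acyclic_Up finite_acyclic_wf_converse by blast

lemma up_neq_self: "x \<in> Ovs \<Longrightarrow> up x \<noteq> Some x"
  using up_acyclic[of x] by (auto simp: Up_iff)

lemma finite_children: "finite (children Ovs up x)"
  using finite_Ovs by (simp add: children_def)

lemma finite_outer_ovals: "finite (outer_ovals Ovs up)"
  using finite_Ovs by (simp add: outer_ovals_def)

lemma finite_ancestors: "finite (ancestors x)"
  using finite_Ovs by (simp add: ancestors_def)

lemma finite_subtree: "finite (subtree x)"
  using finite_Ovs by (simp add: subtree_def)

lemma depth_eq_card_ancestors: "depth Ovs up x = card (ancestors x)"
  by (simp add: depth_def ancestors_def)

lemma ancestors_outer: "up y = None \<Longrightarrow> ancestors y = {}"
  unfolding ancestors_def encloses_def by (auto dest!: tranclD simp: Up_iff)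

lemma ancestors_child:
  assumes "y \<in> Ovs" "up y = Some x"
  shows "ancestors y = insert x (ancestors x)" and "x \<notin> ancestors x"
proof -
  have yx: "(y, x) \<in> Up" and x: "x \<in> Ovs"
    using assms up_closed by (auto simp: Up_iff)
  show "x \<notin> ancestors x"
    using up_acyclic x by (simp add: ancestors_def encloses_def)
  have "(y, q) \<in> Up\<^sup>+ \<longleftrightarrow> q = x \<or> (x, q) \<in> Up\<^sup>+" for q
  proof
    assume "(y, q) \<in> Up\<^sup>+"
    then show "q = x \<or> (x, q) \<in> Up\<^sup>+"
      by (cases rule: converse_tranclE) (use Up_functional yx in blast)+
  qed (use yx in \<open>meson r_into_trancl' trancl_into_trancl2\<close>)
  then show "ancestors y = insert x (ancestors x)"
    using x by (auto simp: ancestors_def encloses_def)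
qed

lemma depth_outer: "up y = None \<Longrightarrow> depth Ovs up y = 0"
  by (simp add: depth_eq_card_ancestors ancestors_outer)

lemma depth_child: "y \<in> Ovs \<Longrightarrow> up y = Some x \<Longrightarrow> depth Ovs up y = Suc (depth Ovs up x)"
  using ancestors_child[of y x] finite_ancestors by (simp add: depth_eq_card_ancestors)

lemma sum_ancestors_outer: "up y = None \<Longrightarrow> sum f (ancestors y) = 0"
  by (simp add: ancestors_outer)

lemma sum_ancestors_child:
  "y \<in> Ovs \<Longrightarrow> up y = Some x \<Longrightarrow> sum f (ancestors y) = f x + sum f (ancestors x)"
  using ancestors_child[of y x] finite_ancestors by simp

lemma rtrancl_Up_linear:
  "(z, a) \<in> Up\<^sup>* \<Longrightarrow> (z, b) \<in> Up\<^sup>* \<Longrightarrow> (a, b) \<in> Up\<^sup>* \<or> (b, a) \<in> Up\<^sup>*"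
proof (induction rule: rtrancl_induct)
  case (step a' a)
  from step.IH[OF step.prems] show ?case
  proof
    assume "(a', b) \<in> Up\<^sup>*"
    then show ?thesis
    proof (cases rule: converse_rtranclE)
      case (step m)
      then have "m = a"
        using Up_functional \<open>(a', a) \<in> Up\<close> by blast
      with step show ?thesis by simp
    qed (use step.hyps(2) in blast)
  next
    assume "(b, a') \<in> Up\<^sup>*"
    then show ?thesis
      using step.hyps(2) by (meson rtrancl.rtrancl_into_rtrancl)
  qed
qed simp

lemma subtree_disjoint:
  assumes "y1 \<in> Ovs" "y2 \<in> Ovs" "y1 \<noteq> y2" "up y1 = up y2"
  shows "subtree y1 \<inter> subtree y2 = {}"
proof -
  have *: False if "(y1, y2) \<in> Up\<^sup>*" "y2 \<in> Ovs" "y1 \<noteq> y2" "up y1 = up y2" for y1 y2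
    using that(1)
  proof (cases rule: converse_rtranclE)
    case (step m)
    with that have "(y2, m) \<in> Up" and "m \<in> Ovs"
      using up_closed by (auto simp: Up_iff)
    with step have "(m, m) \<in> Up\<^sup>+"
      by (meson rtrancl_into_trancl1)
    with \<open>m \<in> Ovs\<close> up_acyclic show False by blast
  qed (use that in simp)
  show ?thesis
  proof (rule ccontr)
    assume "subtree y1 \<inter> subtree y2 \<noteq> {}"
    then obtain z where "(z, y1) \<in> Up\<^sup>*" "(z, y2) \<in> Up\<^sup>*"
      by (auto simp: subtree_def)
    then have "(y1, y2) \<in> Up\<^sup>* \<or> (y2, y1) \<in> Up\<^sup>*"
      by (rule rtrancl_Up_linear)
    with * assms show False by metis
  qed
qed

lemma subtree_eq_insert_children:
  assumes "x \<in> Ovs"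
  shows "subtree x = insert x (\<Union>y\<in>children Ovs up x. subtree y)"
    and "x \<notin> (\<Union>y\<in>children Ovs up x. subtree y)"
proof -
  have "(z, x) \<in> Up\<^sup>* \<longleftrightarrow> z = x \<or> (\<exists>y. (y, x) \<in> Up \<and> (z, y) \<in> Up\<^sup>*)" for z
    by (meson rtranclE rtrancl.rtrancl_into_rtrancl rtrancl.rtrancl_refl)
  then show "subtree x = insert x (\<Union>y\<in>children Ovs up x. subtree y)"
    using assms by (auto simp: subtree_def children_def Up_iff)
  show "x \<notin> (\<Union>y\<in>children Ovs up x. subtree y)"
  proof
    assume "x \<in> (\<Union>y\<in>children Ovs up x. subtree y)"
    then obtain y where "(y, x) \<in> Up" "(x, y) \<in> Up\<^sup>*"
      by (auto simp: subtree_def children_def Up_iff)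
    then have "(x, x) \<in> Up\<^sup>+"
      by (meson rtrancl_into_trancl1)
    with up_acyclic assms show False by blast
  qed
qed

lemma sum_subtree_children:
  assumes "x \<in> Ovs"
  shows "sum f (subtree x) = f x + (\<Sum>y\<in>children Ovs up x. sum f (subtree y))"
proof -
  have "sum f (subtree x) = f x + sum f (\<Union>y\<in>children Ovs up x. subtree y)"
    unfolding subtree_eq_insert_children(1)[OF assms]
    using subtree_eq_insert_children(2)[OF assms] finite_children finite_subtree
    by (simp add: sum.insert)
  also have "sum f (\<Union>y\<in>children Ovs up x. subtree y) = (\<Sum>y\<in>children Ovs up x. sum f (subtree y))"
    by (rule sum.UNION_disjoint)
      (use finite_children finite_subtree subtree_disjoint in \<open>auto simp: children_def\<close>)
  finally show ?thesis .
qed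

lemma subtree_outer_cover: "z \<in> Ovs \<Longrightarrow> \<exists>y\<in>outer_ovals Ovs up. z \<in> subtree y"
proof (induction z rule: wf_induct[OF wf_converse_Up])
  case (1 z)
  show ?case
  proof (cases "up z")
    case None
    then have "z \<in> outer_ovals Ovs up" and "z \<in> subtree z"
      using 1 by (auto simp: outer_ovals_def subtree_def)
    then show ?thesis by blast
  next
    case (Some q)
    then have zq: "(z, q) \<in> Up"
      using 1 by (simp add: Up_iff)
    moreover have "q \<in> Ovs"
      using 1 Some up_closed by blast
    ultimately obtain y where "y \<in> outer_ovals Ovs up" "q \<in> subtree y"
      using "1.IH" by blast
    with zq \<open>z \<in> Ovs\<close> show ?thesis
      unfolding subtree_def by (blast intro: converse_rtrancl_into_rtrancl)
  qed
qed

lemma sum_over_outer_subtrees: "sum f Ovs = (\<Sum>y\<in>outer_ovals Ovs up. sum f (subtree y))"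
proof -
  have "Ovs = (\<Union>y\<in>outer_ovals Ovs up. subtree y)"
    using subtree_outer_cover by (auto simp: subtree_def)
  then have "sum f Ovs = sum f (\<Union>y\<in>outer_ovals Ovs up. subtree y)"
    by simp
  also have "\<dots> = (\<Sum>y\<in>outer_ovals Ovs up. sum f (subtree y))"
    by (rule sum.UNION_disjoint)
      (use finite_outer_ovals finite_subtree subtree_disjoint in \<open>auto simp: outer_ovals_def\<close>)
  finally show ?thesis .
qed

section \<open>The matrix \<open>A\<^sub>\<Gamma>\<close>\<close>

lemma finite_Gverts: "finite (Gverts Ovs)"
  using finite_Ovs by (simp add: Gverts_def)

lemma Gverts_simps [simp]:
  "U1 \<in> Gverts Ovs" "U2 \<in> Gverts Ovs" "U3 \<in> Gverts Ovs" "ROut \<in> Gverts Ovs"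
  "Reg x \<in> Gverts Ovs \<longleftrightarrow> x \<in> Ovs" "Ov x \<in> Gverts Ovs \<longleftrightarrow> x \<in> Ovs" "Head x \<notin> Gverts Ovs"
  by (auto simp: Gverts_def)

lemma Gverts_cases:
  assumes "w \<in> Gverts Ovs"
  obtains "w = U1" | "w = U2" | "w = U3" | "w = ROut"
    | x where "x \<in> Ovs" "w = Reg x" | x where "x \<in> Ovs" "w = Ov x"
  using assms by (auto simp: Gverts_def)

lemma Gedges_iff:
  "{v, w} \<in> Gedges Ovs up \<longleftrightarrow> {v, w} = {U1, U2} \<or> {v, w} = {U1, U3} \<or> {v, w} = {U1, ROut}
     \<or> (\<exists>x\<in>Ovs. {v, w} = {Ov x, Reg x}) \<or> (\<exists>x\<in>Ovs. {v, w} = {Ov x, outside_region up x})"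
  by (simp only: Gedges_def Un_iff image_iff insert_iff empty_iff simp_thms disj_assoc)

lemma Gplus_edges_iff:
  "{v, w} \<in> Gplus_edges Ovs up \<longleftrightarrow> {v, w} \<in> Gedges Ovs up \<or> (\<exists>x\<in>Ovs. {v, w} = {Ov x, Head x})"
  by (auto simp: Gplus_edges_def)

definition Gamma_nbrs :: "'x vtx \<Rightarrow> 'x vtx set" where
  "Gamma_nbrs w = {v \<in> Gverts Ovs. v \<noteq> w \<and> {v, w} \<in> Gedges Ovs up}"

lemma Gamma_nbrs_U1: "Gamma_nbrs U1 = {U2, U3, ROut}"
  and Gamma_nbrs_U2: "Gamma_nbrs U2 = {U1}"
  and Gamma_nbrs_U3: "Gamma_nbrs U3 = {U1}"
  and Gamma_nbrs_ROut: "Gamma_nbrs ROut = insert U1 (Ov ` outer_ovals Ovs up)"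
  unfolding Gamma_nbrs_def Gedges_iff
  by (auto simp: Gverts_def doubleton_eq_iff outside_region_def outer_ovals_def split: option.splits)

lemma Gamma_nbrs_Reg: "x \<in> Ovs \<Longrightarrow> Gamma_nbrs (Reg x) = insert (Ov x) (Ov ` children Ovs up x)"
  unfolding Gamma_nbrs_def Gedges_iff
  by (auto simp: Gverts_def doubleton_eq_iff outside_region_def children_def split: option.splits)

lemma Gamma_nbrs_Ov:
  assumes "x \<in> Ovs"
  shows "Gamma_nbrs (Ov x) = {Reg x, outside_region up x}"
proof (cases "up x")
  case None
  with assms show ?thesis
    unfolding Gamma_nbrs_def Gedges_iff
    by (auto simp: doubleton_eq_iff outside_region_def split: option.splits)
next
  case (Some q)
  with assms have "q \<in> Ovs" "q \<noteq> x"
    using up_closed up_neq_self by blast+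
  with assms Some show ?thesis
    unfolding Gamma_nbrs_def Gedges_iff
    by (auto simp: doubleton_eq_iff outside_region_def split: option.splits) (use Some in force)
qed

lemma Gplus_edge_U1_iff: "{U1, w} \<in> Gplus_edges Ovs up \<longleftrightarrow> w = U2 \<or> w = U3 \<or> w = ROut"
  and Gplus_edge_U2_iff: "{U2, w} \<in> Gplus_edges Ovs up \<longleftrightarrow> w = U1"
  and Gplus_edge_U3_iff: "{U3, w} \<in> Gplus_edges Ovs up \<longleftrightarrow> w = U1"
  and Gplus_edge_ROut_iff:
    "{ROut, w} \<in> Gplus_edges Ovs up \<longleftrightarrow> w = U1 \<or> (\<exists>x\<in>outer_ovals Ovs up. w = Ov x)"
  unfolding Gplus_edges_iff Gedges_iff
  by (auto simp: doubleton_eq_iff outside_region_def outer_ovals_def split: option.splits)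

definition vec_A_Gamma :: "('x vtx \<Rightarrow> rat) \<Rightarrow> 'x vtx \<Rightarrow> rat" where
  "vec_A_Gamma c w = (\<Sum>v\<in>Gverts Ovs. c v * of_int (A_Gamma Ovs up v w))"

lemma vec_A_Gamma_diff: "vec_A_Gamma (\<lambda>v. c v - c' v) w = vec_A_Gamma c w - vec_A_Gamma c' w"
  unfolding vec_A_Gamma_def by (simp add: sum_subtractf[symmetric] left_diff_distrib)

lemma vec_A_Gamma_eq_nbrs:
  assumes "w \<in> Gverts Ovs"
  shows "vec_A_Gamma c w = of_int (weight Ovs up w) * c w + sum c (Gamma_nbrs w)"
proof -
  have "vec_A_Gamma c w
      = c w * of_int (weight Ovs up w) + (\<Sum>v\<in>Gverts Ovs - {w}. c v * of_int (A_Gamma Ovs up v w))"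
    unfolding vec_A_Gamma_def by (subst sum.remove[OF finite_Gverts assms]) (simp add: A_Gamma_def)
  also have "(\<Sum>v\<in>Gverts Ovs - {w}. c v * of_int (A_Gamma Ovs up v w))
      = (\<Sum>v\<in>Gverts Ovs - {w}. if {v, w} \<in> Gedges Ovs up then c v else 0)"
    by (rule sum.cong) (auto simp: A_Gamma_def)
  also have "\<dots> = sum c (Gamma_nbrs w)"
    unfolding Gamma_nbrs_def by (subst sum.inter_filter[symmetric]) (use finite_Gverts in auto)
  finally show ?thesis by simp
qed

lemma vec_A_Gamma_U1: "vec_A_Gamma c U1 = c U1 + c U2 + c U3 + c ROut"
  and vec_A_Gamma_U2: "vec_A_Gamma c U2 = 2 * c U2 + c U1"
  and vec_A_Gamma_U3: "vec_A_Gamma c U3 = 2 * c U3 + c U1"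
  by (simp_all add: vec_A_Gamma_eq_nbrs Gamma_nbrs_U1 Gamma_nbrs_U2 Gamma_nbrs_U3 weight_def)

lemma vec_A_Gamma_ROut:
  "vec_A_Gamma c ROut
     = of_int (weight Ovs up ROut) * c ROut + c U1 + (\<Sum>y\<in>outer_ovals Ovs up. c (Ov y))"
proof -
  have "sum c (insert U1 (Ov ` outer_ovals Ovs up)) = c U1 + sum c (Ov ` outer_ovals Ovs up)"
    using finite_outer_ovals by (intro sum.insert) auto
  moreover have "sum c (Ov ` outer_ovals Ovs up) = (\<Sum>y\<in>outer_ovals Ovs up. c (Ov y))"
    by (subst sum.reindex) (auto simp: inj_on_def)
  ultimately show ?thesis
    by (simp add: vec_A_Gamma_eq_nbrs Gamma_nbrs_ROut add.assoc)
qed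

lemma vec_A_Gamma_Reg:
  assumes "x \<in> Ovs"
  shows "vec_A_Gamma c (Reg x) = 2 * (1 - of_nat (card (children Ovs up x))) * c (Reg x)
           + c (Ov x) + (\<Sum>y\<in>children Ovs up x. c (Ov y))"
proof -
  have "x \<notin> children Ovs up x"
    using up_neq_self assms by (simp add: children_def)
  then have "sum c (insert (Ov x) (Ov ` children Ovs up x)) = c (Ov x) + sum c (Ov ` children Ovs up x)"
    using finite_children by (intro sum.insert) auto
  moreover have "sum c (Ov ` children Ovs up x) = (\<Sum>y\<in>children Ovs up x. c (Ov y))"
    by (subst sum.reindex) (auto simp: inj_on_def)
  ultimately show ?thesis
    using assms by (simp add: vec_A_Gamma_eq_nbrs Gamma_nbrs_Reg add.assoc weight_def)
qed

lemma vec_A_Gamma_Ov: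
  assumes "x \<in> Ovs"
  shows "vec_A_Gamma c (Ov x) = c (Reg x) + c (outside_region up x)"
proof -
  have "outside_region up x \<noteq> Reg x"
    using up_neq_self assms by (auto simp: outside_region_def split: option.splits)
  with assms show ?thesis
    by (simp add: vec_A_Gamma_eq_nbrs Gamma_nbrs_Ov weight_def)
qed

text \<open>Solutions of \<open>d A\<^sub>\<Gamma> = 0\<close> vanish: the oval equations \<open>d(Reg x) + d(outside x) = 0\<close>
  propagate \<open>d(R\<^sub>1) = 0\<close> down the nesting forest, then the region equations propagate
  \<open>d(Ov x) = 0\<close> up from the innermost ovals.\<close>

lemma kernel_Reg_zero:
  assumes "\<forall>x\<in>Ovs. vec_A_Gamma d (Ov x) = 0" and "d ROut = 0"
  shows "x \<in> Ovs \<Longrightarrow> d (Reg x) = 0"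
proof (induction x rule: wf_induct[OF wf_converse_Up])
  case (1 x)
  have sum0: "d (Reg x) + d (outside_region up x) = 0"
    using bspec[OF assms(1) \<open>x \<in> Ovs\<close>] vec_A_Gamma_Ov[OF \<open>x \<in> Ovs\<close>] by simp
  show ?case
  proof (cases "up x")
    case None
    with sum0 assms(2) show ?thesis by (simp add: outside_region_def)
  next
    case (Some q)
    with \<open>x \<in> Ovs\<close> have "(q, x) \<in> Up\<inverse>" "q \<in> Ovs"
      using up_closed by (auto simp: Up_iff)
    then have "d (Reg q) = 0"
      using "1.IH" by blast
    with sum0 Some show ?thesis by (simp add: outside_region_def)
  qed
qed

lemma kernel_Ov_zero:
  assumes "\<forall>x\<in>Ovs. vec_A_Gamma d (Reg x) = 0" and "\<forall>x\<in>Ovs. d (Reg x) = 0"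
  shows "x \<in> Ovs \<Longrightarrow> d (Ov x) = 0"
proof (induction x rule: wf_induct[OF wf_Up])
  case (1 x)
  have "(\<Sum>y\<in>children Ovs up x. d (Ov y)) = 0"
    by (rule sum.neutral) (use "1.IH" in \<open>auto simp: children_def Up_iff\<close>)
  with bspec[OF assms(1) \<open>x \<in> Ovs\<close>] bspec[OF assms(2) \<open>x \<in> Ovs\<close>] show ?case
    using vec_A_Gamma_Reg[OF \<open>x \<in> Ovs\<close>, of d] by simp
qed

lemma vec_A_Gamma_kernel:
  assumes "\<forall>w\<in>Gverts Ovs. vec_A_Gamma d w = 0" and "\<forall>v. v \<notin> Gverts Ovs \<longrightarrow> d v = 0"
  shows "d = (\<lambda>_. 0)"
proof
  fix v
  have U: "d U1 + d U2 + d U3 + d ROut = 0" "2 * d U2 + d U1 = 0" "2 * d U3 + d U1 = 0"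
    using assms(1) vec_A_Gamma_U1 vec_A_Gamma_U2 vec_A_Gamma_U3 by (metis Gverts_simps(1-3))+
  then have ROut: "d ROut = 0"
    by linarith
  have "\<forall>x\<in>Ovs. vec_A_Gamma d (Ov x) = 0" "\<forall>x\<in>Ovs. vec_A_Gamma d (Reg x) = 0"
    using assms(1) by simp_all
  then have Reg: "\<forall>x\<in>Ovs. d (Reg x) = 0" and Ov: "\<forall>x\<in>Ovs. d (Ov x) = 0"
    using kernel_Reg_zero[of d] kernel_Ov_zero[of d] ROut by blast+
  have "(\<Sum>y\<in>outer_ovals Ovs up. d (Ov y)) = 0"
    using Ov by (simp add: outer_ovals_def)
  then have U1: "d U1 = 0"
    using assms(1) vec_A_Gamma_ROut[of d] ROut by simp
  show "d v = 0"
  proof (cases "v \<in> Gverts Ovs")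
    case True
    then show ?thesis
      by (cases rule: Gverts_cases) (use U U1 ROut Reg Ov in auto)
  qed (use assms(2) in blast)
qed

end

lemma sum_signs_eq_card_diff:
  fixes f :: "'a \<Rightarrow> int"
  assumes "finite S" and "\<forall>z\<in>S. f z = 1 \<or> f z = -1" and "e = 1 \<or> e = -1"
  shows "sum f S = e * (int (card {z\<in>S. f z = e}) - int (card {z\<in>S. f z \<noteq> e}))"
proof -
  have "sum f S = sum f {z\<in>S. f z = e} + sum f {z\<in>S. f z \<noteq> e}"
    using assms(1) by (subst sum.union_disjoint[symmetric]) (auto intro: sum.cong)
  also have "sum f {z\<in>S. f z = e} = sum (\<lambda>_. e) {z\<in>S. f z = e}"
    by (rule sum.cong) auto
  also have "sum f {z\<in>S. f z \<noteq> e} = sum (\<lambda>_. -e) {z\<in>S. f z \<noteq> e}"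
    by (rule sum.cong) (use assms(2,3) in auto)
  finally show ?thesis
    by (simp add: algebra_simps)
qed

locale signed_oval_forest = oval_forest Ovs up
  for Ovs :: "'x set" and up :: "'x \<Rightarrow> 'x option" +
  fixes eps :: "'x \<Rightarrow> int"
  assumes eps_sign: "x \<in> Ovs \<Longrightarrow> eps x = 1 \<or> eps x = -1"

lemma signed_oval_forest_if_even_scheme:
  "even_scheme Ovs up eps \<Longrightarrow> signed_oval_forest Ovs up eps"
  unfolding even_scheme_def signed_oval_forest_def oval_forest_def signed_oval_forest_axioms_def
  by blast

context signed_oval_forest
begin

lemma sum_eps_eq_Lambda: "sum eps Ovs = int (Lambda_plus Ovs eps) - int (Lambda_minus Ovs eps)"
proof -
  have "{z\<in>Ovs. eps z \<noteq> 1} = {z\<in>Ovs. eps z = -1}"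
    using eps_sign by force
  then show ?thesis
    using sum_signs_eq_card_diff[OF finite_Ovs, of eps 1] eps_sign
    by (simp add: Lambda_plus_def Lambda_minus_def)
qed

text \<open>For an outer oval, the injective pairs it belongs to are exactly those with the ovals
  it encloses, so \<open>\<Pi>\<^sup>\<plusminus>\<close> count the ovals of its subtree of sign different from / equal to its own.\<close>

lemma sum_eps_subtree_outer:
  assumes "y \<in> outer_ovals Ovs up"
  shows "sum eps (subtree y) = eps y * (1 + int (Pi_minus Ovs up eps y) - int (Pi_plus Ovs up eps y))"
proof -
  have y: "y \<in> Ovs" "up y = None"
    using assms by (auto simp: outer_ovals_def)
  define D where "D = {z\<in>Ovs. (z, y) \<in> Up\<^sup>+}"
  have D: "subtree y = insert y D" "y \<notin> D" "finite D"
    using y up_acyclic finite_Ovs by (auto simp: subtree_def D_def rtrancl_eq_or_trancl)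
  have "\<not> encloses Ovs up x y" for x
    using y(2) unfolding encloses_def by (auto dest!: tranclD simp: Up_iff)
  then have pair_iff: "injective_pair Ovs up y x \<longleftrightarrow> x \<in> D" for x
    using y by (auto simp: injective_pair_def D_def encloses_def)
  have "Pi_plus Ovs up eps y = card {z\<in>D. eps z \<noteq> eps y}"
    and "Pi_minus Ovs up eps y = card {z\<in>D. eps z = eps y}"
    unfolding Pi_plus_def Pi_minus_def pair_iff by (auto simp: D_def intro: arg_cong[where f = card])
  moreover have "sum eps D = eps y * (int (card {z\<in>D. eps z = eps y}) - int (card {z\<in>D. eps z \<noteq> eps y}))"
    by (rule sum_signs_eq_card_diff) (use D(3) eps_sign y in \<open>auto simp: D_def\<close>)
  ultimately show ?thesis
    using D by (simp add: algebra_simps)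
qed

section \<open>The vector \<open>c\<close> in closed form\<close>

definition c_explicit :: "'x vtx \<Rightarrow> rat" where
  "c_explicit v = (case v of
       U1 \<Rightarrow> of_int (4 * sum eps Ovs)
     | U2 \<Rightarrow> of_int (-2 * sum eps Ovs)
     | U3 \<Rightarrow> of_int (-2 * sum eps Ovs)
     | ROut \<Rightarrow> 0
     | Reg x \<Rightarrow> if x \<in> Ovs
         then of_int (2 * (-1) ^ depth Ovs up x * (sum eps (ancestors x) + eps x)) else 0
     | Ov x \<Rightarrow> if x \<in> Ovs
         then of_int (-4 * (-1) ^ depth Ovs up x * (sum eps (ancestors x) + sum eps (subtree x))) else 0
     | Head x \<Rightarrow> 0)"

lemma c_explicit_Ov_outer:
  "y \<in> outer_ovals Ovs up \<Longrightarrow> c_explicit (Ov y) = of_int (-4 * sum eps (subtree y))"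
  by (simp add: c_explicit_def outer_ovals_def depth_outer sum_ancestors_outer)

lemma vec_A_Gamma_c_explicit_ROut: "vec_A_Gamma c_explicit ROut = 0"
proof -
  have "(\<Sum>y\<in>outer_ovals Ovs up. c_explicit (Ov y))
      = of_int (\<Sum>y\<in>outer_ovals Ovs up. -4 * sum eps (subtree y))"
    unfolding of_int_sum by (rule sum.cong) (simp_all add: c_explicit_Ov_outer)
  also have "\<dots> = of_int (-4 * sum eps Ovs)"
    by (simp add: sum_over_outer_subtrees[of eps] sum_distrib_left)
  finally show ?thesis
    by (simp add: vec_A_Gamma_ROut c_explicit_def)
qed

lemma vec_A_Gamma_c_explicit_Reg:
  assumes "x \<in> Ovs"
  shows "vec_A_Gamma c_explicit (Reg x) = 0"
proof -
  let ?d = "depth Ovs up x" and ?C = "children Ovs up x" and ?a = "sum eps (ancestors x)"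
  have "(\<Sum>y\<in>?C. c_explicit (Ov y)) = of_int (\<Sum>y\<in>?C. 4 * (-1) ^ ?d * (eps x + ?a + sum eps (subtree y)))"
    unfolding of_int_sum
    by (rule sum.cong) (auto simp: c_explicit_def children_def depth_child sum_ancestors_child)
  also have "\<dots> = of_int (4 * (-1) ^ ?d * (int (card ?C) * (eps x + ?a) + (sum eps (subtree x) - eps x)))"
    using sum_subtree_children[OF assms, of eps]
    by (simp add: sum_distrib_left[symmetric] sum.distrib)
  finally show ?thesis
    using assms by (simp add: vec_A_Gamma_Reg c_explicit_def) (simp add: algebra_simps)
qed

lemma vec_A_Gamma_c_explicit_Ov:
  assumes "x \<in> Ovs"
  shows "vec_A_Gamma c_explicit (Ov x) = -2 * of_int (arrow_sign Ovs up eps x)"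
proof (cases "up x")
  case None
  with assms show ?thesis
    by (simp add: vec_A_Gamma_Ov c_explicit_def outside_region_def depth_outer
        sum_ancestors_outer arrow_sign_def)
next
  case (Some q)
  with assms have "q \<in> Ovs"
    using up_closed by blast
  with assms Some show ?thesis
    by (simp add: vec_A_Gamma_Ov c_explicit_def outside_region_def depth_child
        sum_ancestors_child arrow_sign_def) (simp add: algebra_simps)
qed

definition solves_c_system :: "('x vtx \<Rightarrow> rat) \<Rightarrow> bool" where
  "solves_c_system c \<longleftrightarrow> (\<forall>w\<in>Gverts Ovs. vec_A_Gamma c w = -2 * of_int (s_vec Ovs up eps w))
     \<and> (\<forall>v. v \<notin> Gverts Ovs \<longrightarrow> c v = 0)"

lemma solves_c_system_c_explicit: "solves_c_system c_explicit"
  unfolding solves_c_system_def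
proof (intro conjI ballI allI impI)
  fix v
  assume "v \<notin> Gverts Ovs"
  then show "c_explicit v = 0"
    by (cases v) (auto simp: c_explicit_def)
next
  fix w
  assume "w \<in> Gverts Ovs"
  then show "vec_A_Gamma c_explicit w = -2 * of_int (s_vec Ovs up eps w)"
  proof (cases rule: Gverts_cases)
    case 4
    then show ?thesis by (simp add: s_vec_def vec_A_Gamma_c_explicit_ROut)
  next
    case 5
    then show ?thesis by (simp add: s_vec_def vec_A_Gamma_c_explicit_Reg)
  next
    case 6
    then show ?thesis by (simp add: s_vec_def vec_A_Gamma_c_explicit_Ov)
  qed (simp_all add: s_vec_def vec_A_Gamma_U1 vec_A_Gamma_U2 vec_A_Gamma_U3 c_explicit_def)
qed

lemma c_vec_eq_c_explicit: "c_vec Ovs up eps = c_explicit"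
proof -
  have "c = c_explicit" if c: "solves_c_system c" for c
  proof -
    have "(\<lambda>v. c v - c_explicit v) = (\<lambda>_. 0)"
    proof (rule vec_A_Gamma_kernel)
      show "\<forall>w\<in>Gverts Ovs. vec_A_Gamma (\<lambda>v. c v - c_explicit v) w = 0"
        using c solves_c_system_c_explicit by (simp add: solves_c_system_def vec_A_Gamma_diff)
      show "\<forall>v. v \<notin> Gverts Ovs \<longrightarrow> c v - c_explicit v = 0"
        using c solves_c_system_c_explicit by (simp add: solves_c_system_def)
    qed
    then show ?thesis
      by (simp add: fun_eq_iff)
  qed
  then have "(THE c. solves_c_system c) = c_explicit"
    using solves_c_system_c_explicit by blast
  moreover have "c_vec Ovs up eps = (THE c. solves_c_system c)"
    unfolding c_vec_def solves_c_system_def vec_A_Gamma_def ..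
  ultimately show ?thesis
    by simp
qed

end

section \<open>Reduction modulo \<open>p\<close>\<close>

lemma rat_cong0_of_int_iff:
  assumes "prime p"
  shows "rat_cong0 p (of_int n) \<longleftrightarrow> int p dvd n"
proof
  assume "rat_cong0 p (of_int n)"
  then obtain a b :: int where ab: "b \<noteq> 0" "\<not> int p dvd b" "int p dvd a"
    and "of_int n = (of_int a / of_int b :: rat)"
    unfolding rat_cong0_def by blast
  then have "n * b = a"
    by (simp add: field_simps flip: of_int_mult of_int_eq_iff)
  with ab have "int p dvd n * b"
    by simp
  with ab(2) assms show "int p dvd n"
    by (simp add: prime_dvd_mult_iff)
next
  assume "int p dvd n"
  moreover have "\<not> int p dvd 1"
    using assms prime_gt_1_nat by fastforce
  ultimately show "rat_cong0 p (of_int n)"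
    unfolding rat_cong0_def by (intro exI[of _ n] exI[of _ 1]) simp
qed

lemma odd_prime_dvd_2_mult_iff:
  assumes "prime p" and "odd p"
  shows "int p dvd 2 * n \<longleftrightarrow> int p dvd n"
proof -
  have "\<not> int p dvd 2"
  proof
    assume "int p dvd 2"
    then have "p dvd 2"
      by presburger
    with assms show False
      using prime_ge_2_nat[of p] dvd_imp_le[of p 2] by simp
  qed
  with assms(1) show ?thesis
    by (auto simp: prime_dvd_mult_iff)
qed

locale signed_oval_forest_mod_p = signed_oval_forest Ovs up eps
  for Ovs :: "'x set" and up :: "'x \<Rightarrow> 'x option" and eps :: "'x \<Rightarrow> int" +
  fixes p :: nat
  assumes prime_p: "prime p" and odd_p: "odd p"
begin

abbreviation Z :: "'x vtx set" where
  "Z \<equiv> Z_verts p Ovs up eps"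

lemma dvd_2_mult_iff: "int p dvd 2 * n \<longleftrightarrow> int p dvd n"
  and dvd_4_mult_iff: "int p dvd 4 * n \<longleftrightarrow> int p dvd n"
  using odd_prime_dvd_2_mult_iff[OF prime_p odd_p, of n]
    odd_prime_dvd_2_mult_iff[OF prime_p odd_p, of "2 * n"] by simp_all

lemma rat_cong0_c_explicit_U: "rat_cong0 p (c_explicit U1) \<longleftrightarrow> int p dvd sum eps Ovs"
  "rat_cong0 p (c_explicit U2) \<longleftrightarrow> int p dvd sum eps Ovs"
  "rat_cong0 p (c_explicit U3) \<longleftrightarrow> int p dvd sum eps Ovs"
  by (simp_all only: c_explicit_def vtx.case rat_cong0_of_int_iff[OF prime_p] mult_minus_left
      dvd_minus_iff dvd_2_mult_iff dvd_4_mult_iff)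

lemma rat_cong0_c_explicit_ROut: "rat_cong0 p (c_explicit ROut)"
  using rat_cong0_of_int_iff[OF prime_p, of 0] by (simp add: c_explicit_def)

lemma rat_cong0_c_explicit_Ov_outer:
  assumes "y \<in> outer_ovals Ovs up"
  shows "rat_cong0 p (c_explicit (Ov y))
    \<longleftrightarrow> [int (Pi_plus Ovs up eps y) - int (Pi_minus Ovs up eps y) = 1] (mod int p)"
proof -
  let ?k = "1 + int (Pi_minus Ovs up eps y) - int (Pi_plus Ovs up eps y)"
  have "eps y = 1 \<or> eps y = -1"
    using assms eps_sign by (simp add: outer_ovals_def)
  then have "sum eps (subtree y) = ?k \<or> sum eps (subtree y) = - ?k"
    using sum_eps_subtree_outer[OF assms] by auto
  then have "int p dvd sum eps (subtree y) \<longleftrightarrow> int p dvd ?k"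
    by (metis dvd_minus_iff)
  moreover have "int p dvd ?k \<longleftrightarrow> [int (Pi_plus Ovs up eps y) - int (Pi_minus Ovs up eps y) = 1] (mod int p)"
    by (simp add: cong_iff_dvd_diff dvd_diff_commute algebra_simps)
  ultimately show ?thesis
    by (simp only: c_explicit_Ov_outer[OF assms] rat_cong0_of_int_iff[OF prime_p] mult_minus_left
        dvd_minus_iff dvd_4_mult_iff)
qed

lemma c_plus_eq_c_explicit:
  "c_plus Ovs up eps w = (case w of Head x \<Rightarrow> of_int (2 * arrow_sign Ovs up eps x) | _ \<Rightarrow> c_explicit w)"
  by (cases w) (simp_all add: c_plus_def c_vec_eq_c_explicit)

lemma Ov_notin_Z: "Ov x \<notin> Z"
proof
  assume Ov: "Ov x \<in> Z"
  then have "x \<in> Ovs"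
    by (simp add: Z_verts_def)
  with Ov have "rat_cong0 p (c_plus Ovs up eps (Head x))"
    by (auto simp: Z_verts_def Gplus_edges_def)
  then have "int p dvd arrow_sign Ovs up eps x"
    by (simp only: c_plus_eq_c_explicit vtx.case rat_cong0_of_int_iff[OF prime_p] dvd_2_mult_iff)
  moreover have "\<bar>arrow_sign Ovs up eps x\<bar> = 1"
    using eps_sign[OF \<open>x \<in> Ovs\<close>] by (auto simp: arrow_sign_def abs_mult power_abs)
  ultimately have "int p dvd 1"
    by (metis dvd_abs_iff)
  with prime_p show False
    by (simp add: prime_gt_1_nat)
qed

lemma U1_in_Z_iff: "U1 \<in> Z \<longleftrightarrow> int p dvd sum eps Ovs"
  and U2_in_Z_iff: "U2 \<in> Z \<longleftrightarrow> int p dvd sum eps Ovs"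
  and U3_in_Z_iff: "U3 \<in> Z \<longleftrightarrow> int p dvd sum eps Ovs"
  by (auto simp: Z_verts_def Gplus_edge_U1_iff Gplus_edge_U2_iff Gplus_edge_U3_iff
      c_plus_eq_c_explicit c_vec_eq_c_explicit rat_cong0_c_explicit_U rat_cong0_c_explicit_ROut)

lemma ROut_in_Z_iff:
  "ROut \<in> Z \<longleftrightarrow> int p dvd sum eps Ovs \<and>
     (\<forall>x\<in>outer_ovals Ovs up. [int (Pi_plus Ovs up eps x) - int (Pi_minus Ovs up eps x) = 1] (mod int p))"
  by (auto simp: Z_verts_def Gplus_edge_ROut_iff c_plus_eq_c_explicit c_vec_eq_c_explicit
      rat_cong0_c_explicit_U rat_cong0_c_explicit_ROut rat_cong0_c_explicit_Ov_outer)

lemma Z_subset: "Z \<subseteq> {U1, U2, U3, ROut} \<union> Reg ` Ovs"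
  using Ov_notin_Z by (auto simp: Z_verts_def Gverts_def)

lemma Z_edges_eq: "Z_edges p Ovs up eps = {e \<in> {{U1, U2}, {U1, U3}, {U1, ROut}}. e \<subseteq> Z}"
  using Ov_notin_Z by (auto simp: Z_edges_def Gedges_def)

end

theorem proposition1p9:
  fixes Ovs :: "'x set" and up :: "'x \<Rightarrow> 'x option" and eps :: "'x \<Rightarrow> int" and p :: nat
  assumes "even_scheme Ovs up eps" and "prime p" and "odd p"
  shows "(\<not> [Lambda_minus Ovs eps = Lambda_plus Ovs eps] (mod p) \<longrightarrow>
            Z_edges p Ovs up eps = {} \<and> Z_verts p Ovs up eps \<subseteq> Reg ` Ovs)
       \<and> ([Lambda_minus Ovs eps = Lambda_plus Ovs eps] (mod p) \<longrightarrow>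
            {U1, U2, U3} \<subseteq> Z_verts p Ovs up eps
          \<and> {{U1, U2}, {U1, U3}} \<subseteq> Z_edges p Ovs up eps
          \<and> ((ROut \<in> Z_verts p Ovs up eps \<and> {U1, ROut} \<in> Z_edges p Ovs up eps) \<longleftrightarrow>
               (\<forall>x\<in>outer_ovals Ovs up.
                  [int (Pi_plus Ovs up eps x) - int (Pi_minus Ovs up eps x) = 1] (mod int p)))
          \<and> Z_edges p Ovs up eps \<subseteq> {{U1, U2}, {U1, U3}, {U1, ROut}}
          \<and> Z_verts p Ovs up eps \<subseteq> {U1, U2, U3, ROut} \<union> Reg ` Ovs)"
proof -
  interpret signed_oval_forest_mod_p Ovs up eps p
    using assms signed_oval_forest_if_even_scheme
    by (simp add: signed_oval_forest_mod_p_def signed_oval_forest_mod_p_axioms_def)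
  have "[Lambda_minus Ovs eps = Lambda_plus Ovs eps] (mod p) \<longleftrightarrow> int p dvd sum eps Ovs"
    unfolding sum_eps_eq_Lambda
    by (simp add: cong_int_iff[symmetric] cong_iff_dvd_diff dvd_diff_commute)
  then show ?thesis
    unfolding Z_edges_eq using Z_subset U1_in_Z_iff U2_in_Z_iff U3_in_Z_iff ROut_in_Z_iff by auto
qed

end
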